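(* Let $a>b>0$ and consider the ellipse $E:\ \frac{x^2}{a^2}+\frac{y^2}{b^2}=1$. For a point $A$ of the plane let $n(A)$ denote the number of points $B\in E$ such that $A$ lies on the normal line to $E$ at $B$. Put $$x_0=\sqrt{\frac{a^4(a^2-2b^2)^3}{(a^2-b^2)(a^2+b^2)^3}},\qquad y_0=\sqrt{\frac{b^4(2a^2-b^2)^3}{(a^2-b^2)(a^2+b^2)^3}}.$$ Then: (1) If $a^2>2b^2$, the four points $(\pm x_0,\pm y_0)$ (all sign combinations) lie on $E$ and divide $E$ into four arcs such that $n(A)=4$ for the points $A$ of some of these arcs and $n(A)=2$ for the points $A$ of the others. (2) If $a^2\le 2b^2$, then $n(A)=2$ for every point $A\in E$.
   Context: For $A\in E$ the point $B=A$ itself is counted in $n(A)$. The points $(\pm x_0,\pm y_0)$ are the intersection points of $E$ with the astroid $\sqrt[3]{a^2X^2}+\sqrt[3]{b^2Y^2}=\sqrt[3]{(a^2-b^2)^2}$ (the evolute of $E$). *)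

theory Defs
  imports "HOL-Analysis.Analysis"
begin

definition ellipse :: "real \<Rightarrow> real \<Rightarrow> (real \<times> real) set" where
  "ellipse a b = {(x, y). x\<^sup>2 / a\<^sup>2 + y\<^sup>2 / b\<^sup>2 = 1}"

text \<open>Normal line to the ellipse at B: the line through B in the direction of the
  gradient (x/a^2, y/b^2) of the defining function at B.\<close>
definition normal_line :: "real \<Rightarrow> real \<Rightarrow> real \<times> real \<Rightarrow> (real \<times> real) set" where
  "normal_line a b B = {B + t *\<^sub>R (fst B / a\<^sup>2, snd B / b\<^sup>2) | t. True}"

text \<open>n(A): number of points B on the ellipse whose normal line passes through A
  (B = A itself is counted when A is on the ellipse).\<close>
definition num_normals :: "real \<Rightarrow> real \<Rightarrow> real \<times> real \<Rightarrow> nat" where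
  "num_normals a b A = card {B \<in> ellipse a b. A \<in> normal_line a b B}"

end

theory Submission
  imports Defs "HOL-Library.Quadratic_Discriminant" "HOL-Real_Asymp.Real_Asymp"
begin

text \<open>
  Write a point A of the ellipse as (a P, b Q) with P^2 + Q^2 = 1. Scaling the rational
  parametrisation t -> (P + iQ)(t + i)/(t - i) of the unit circle, which omits only (P, Q),
  gives a bijection from the real line onto the ellipse minus A. The point A lies on the normal
  at the point with parameter t iff t is a root of an explicit real cubic, so n(A) is one more
  than the number of real roots. The discriminant of the cubic is
  4 ((a^2 - b^2) (a^2 + b^2)^3 Q^2 - b^2 (2 a^2 - b^2)^3): it is positive (three roots, n(A) = 4)
  when |y_A| > y0 and negative (one root, n(A) = 2) when |y_A| < y0. The identity
  a^2 (a^2 - 2 b^2)^3 + b^2 (2 a^2 - b^2)^3 = (a^2 - b^2) (a^2 + b^2)^3 shows that the points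
  (+-x0, +-y0) lie on the ellipse when a^2 > 2 b^2, cutting it into the arcs |y| > y0 and
  |x| > x0, and that y0 >= b when a^2 <= 2 b^2.
\<close>

section \<open>Real roots of a cubic\<close>

definition cubic_roots :: "real \<Rightarrow> real \<Rightarrow> real \<Rightarrow> real \<Rightarrow> real set" where
  "cubic_roots c3 c2 c1 c0 = {t. c3 * t^3 + c2 * t\<^sup>2 + c1 * t + c0 = 0}"

definition cubic_discrim :: "real \<Rightarrow> real \<Rightarrow> real \<Rightarrow> real \<Rightarrow> real" where
  "cubic_discrim c3 c2 c1 c0 =
     c2\<^sup>2 * c1\<^sup>2 - 4 * c3 * c1^3 - 4 * c2^3 * c0 - 27 * c3\<^sup>2 * c0\<^sup>2 + 18 * c3 * c2 * c1 * c0"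

lemma monic_cubic_has_root: "\<exists>t::real. t^3 + c2 * t\<^sup>2 + c1 * t + c0 = 0"
proof -
  let ?f = "\<lambda>t::real. t^3 + c2 * t\<^sup>2 + c1 * t + c0"
  have "eventually (\<lambda>t. ?f t < 0) at_bot" "eventually (\<lambda>t. 0 < ?f t) at_top"
    by real_asymp+
  then obtain u v where "?f u < 0" "u \<le> 0" "0 < ?f v" "0 \<le> v"
    unfolding eventually_at_bot_linorder eventually_at_top_linorder
    by (metis min.cobounded1 min.cobounded2 max.cobounded1 max.cobounded2)
  moreover have "continuous_on {u..v} ?f"
    by (intro continuous_intros)
  ultimately show ?thesis
    using IVT'[of ?f u 0 v] by force
qed

lemma cubic_roots_nonempty:
  assumes "c3 \<noteq> 0"
  shows "cubic_roots c3 c2 c1 c0 \<noteq> {}"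
proof -
  obtain t where "t^3 + (c2 / c3) * t\<^sup>2 + (c1 / c3) * t + c0 / c3 = 0"
    using monic_cubic_has_root by blast
  then have "c3 * t^3 + c2 * t\<^sup>2 + c1 * t + c0 = 0"
    using assms by (simp add: field_simps)
  then show ?thesis
    unfolding cubic_roots_def by blast
qed

lemma cubic_factor:
  assumes "c3 * r^3 + c2 * r\<^sup>2 + c1 * r + c0 = 0"
  defines "e \<equiv> c2 + c3 * r" and "h \<equiv> c1 + (c2 + c3 * r) * r"
  shows "cubic_roots c3 c2 c1 c0 = insert r {t. c3 * t\<^sup>2 + e * t + h = 0}"
    and "cubic_discrim c3 c2 c1 c0 = discrim c3 e h * (c3 * r\<^sup>2 + e * r + h)\<^sup>2"
proof -
  have c0: "c0 = - (c3 * r^3 + c2 * r\<^sup>2 + c1 * r)"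
    using assms(1) by simp
  have "c3 * t^3 + c2 * t\<^sup>2 + c1 * t + c0 = (t - r) * (c3 * t\<^sup>2 + e * t + h)" for t
    unfolding c0 e_def h_def by algebra
  then show "cubic_roots c3 c2 c1 c0 = insert r {t. c3 * t\<^sup>2 + e * t + h = 0}"
    unfolding cubic_roots_def by auto
  show "cubic_discrim c3 c2 c1 c0 = discrim c3 e h * (c3 * r\<^sup>2 + e * r + h)\<^sup>2"
    unfolding cubic_discrim_def discrim_def c0 e_def h_def by algebra
qed

lemma quadratic_roots_eq_empty:
  "a \<noteq> 0 \<Longrightarrow> discrim a b c < 0 \<Longrightarrow> {x::real. a * x\<^sup>2 + b * x + c = 0} = {}"
  using discriminant_negative by blast

lemma card_quadratic_roots:
  assumes "a \<noteq> 0" "discrim a b c > 0"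
  shows "card {x::real. a * x\<^sup>2 + b * x + c = 0} = 2"
proof -
  let ?r = "\<lambda>s. (-b + s * sqrt (discrim a b c)) / (2 * a)"
  have "{x. a * x\<^sup>2 + b * x + c = 0} = {?r 1, ?r (-1)}"
    using discriminant_nonneg[OF assms(1)] assms(2) by auto
  moreover have "?r 1 \<noteq> ?r (-1)"
    using assms by simp
  ultimately show ?thesis
    by simp
qed

lemma card_cubic_roots:
  assumes "c3 \<noteq> 0"
  shows "cubic_discrim c3 c2 c1 c0 < 0 \<Longrightarrow> card (cubic_roots c3 c2 c1 c0) = 1"
    and "cubic_discrim c3 c2 c1 c0 > 0 \<Longrightarrow> card (cubic_roots c3 c2 c1 c0) = 3"
proof -
  obtain r where r: "r \<in> cubic_roots c3 c2 c1 c0"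
    using cubic_roots_nonempty[OF assms] by blast
  define e h where "e = c2 + c3 * r" and "h = c1 + (c2 + c3 * r) * r"
  note factor = cubic_factor[of c3 r c2 c1 c0, folded e_def h_def]
  have roots: "cubic_roots c3 c2 c1 c0 = insert r {t. c3 * t\<^sup>2 + e * t + h = 0}"
    and discr: "cubic_discrim c3 c2 c1 c0 = discrim c3 e h * (c3 * r\<^sup>2 + e * r + h)\<^sup>2"
    using factor r unfolding cubic_roots_def by auto
  show "card (cubic_roots c3 c2 c1 c0) = 1" if "cubic_discrim c3 c2 c1 c0 < 0"
  proof -
    have "discrim c3 e h < 0"
      using that unfolding discr by (metis mult_nonneg_nonneg not_less zero_le_power2)
    then show ?thesis
      unfolding roots using quadratic_roots_eq_empty[OF assms] by simp
  qed
  show "card (cubic_roots c3 c2 c1 c0) = 3" if "cubic_discrim c3 c2 c1 c0 > 0"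
  proof -
    have "discrim c3 e h > 0" and "r \<notin> {t. c3 * t\<^sup>2 + e * t + h = 0}"
      using that unfolding discr by (auto simp: zero_less_mult_iff)
    moreover from this have "card {t. c3 * t\<^sup>2 + e * t + h = 0} = 2"
      using card_quadratic_roots[OF assms] by blast
    ultimately show ?thesis
      unfolding roots by (simp add: card_insert_if card_ge_0_finite)
  qed
qed

section \<open>A rational parametrisation of the circle\<close>

(* In complex notation circle_param P Q t = (P + iQ) (t + i) / (t - i); the omitted point (P, Q)
   corresponds to t = infinity. *)
definition circle_param :: "real \<Rightarrow> real \<Rightarrow> real \<Rightarrow> real \<times> real" where
  "circle_param P Q t =
     ((P * (t\<^sup>2 - 1) - 2 * Q * t) / (t\<^sup>2 + 1), (Q * (t\<^sup>2 - 1) + 2 * P * t) / (t\<^sup>2 + 1))"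

lemma sq_plus_one_neq_zero: "(t::real)\<^sup>2 + 1 \<noteq> 0"
  by (metis power_one sum_power2_eq_zero_iff zero_neq_one)

lemma circle_param_on_circle:
  assumes "P\<^sup>2 + Q\<^sup>2 = 1" "circle_param P Q t = (u, v)"
  shows "u\<^sup>2 + v\<^sup>2 = 1"
  using assms sq_plus_one_neq_zero[of t]
  unfolding circle_param_def by (auto simp: field_simps) algebra

lemma circle_param_inverse:
  assumes "P\<^sup>2 + Q\<^sup>2 = 1" "circle_param P Q t = (u, v)"
  shows "u * P + v * Q \<noteq> 1" and "t = (v * P - u * Q) / (1 - (u * P + v * Q))"
proof -
  have "u * P + v * Q = (t\<^sup>2 - 1) / (t\<^sup>2 + 1)" and "v * P - u * Q = 2 * t / (t\<^sup>2 + 1)"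
    using assms sq_plus_one_neq_zero[of t]
    unfolding circle_param_def by (auto simp: field_simps) algebra+
  moreover have "1 - (t\<^sup>2 - 1) / (t\<^sup>2 + 1) = 2 / (t\<^sup>2 + 1)"
    using sq_plus_one_neq_zero[of t] by (simp add: field_simps)
  ultimately show "u * P + v * Q \<noteq> 1" and "t = (v * P - u * Q) / (1 - (u * P + v * Q))"
    using sq_plus_one_neq_zero[of t] by auto
qed

lemma circle_param_eq_rotation:
  "circle_param P Q t = (P * c - Q * s, Q * c + P * s)"
  if "c = (t\<^sup>2 - 1) / (t\<^sup>2 + 1)" "s = 2 * t / (t\<^sup>2 + 1)"
  unfolding circle_param_def that by (simp add: divide_simps)

lemma circle_param_surj:
  assumes "P\<^sup>2 + Q\<^sup>2 = 1" "u\<^sup>2 + v\<^sup>2 = 1" "u * P + v * Q \<noteq> 1"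
  shows "circle_param P Q ((v * P - u * Q) / (1 - (u * P + v * Q))) = (u, v)"
proof -
  define c s where "c = u * P + v * Q" and "s = v * P - u * Q"
  define t where "t = s / (1 - c)"
  have "1 - c \<noteq> 0"
    using assms(3) unfolding c_def by simp
  have "s\<^sup>2 = (1 - c) * (1 + c)"
    using assms(1,2) unfolding c_def s_def by algebra
  then have "t\<^sup>2 = (1 + c) / (1 - c)"
    using \<open>1 - c \<noteq> 0\<close> unfolding t_def by (simp add: power_divide power2_eq_square)
  then have "t\<^sup>2 + 1 = 2 / (1 - c)" "t\<^sup>2 - 1 = 2 * c / (1 - c)"
    using \<open>1 - c \<noteq> 0\<close> by (simp_all add: field_simps)
  then have "c = (t\<^sup>2 - 1) / (t\<^sup>2 + 1)" "s = 2 * t / (t\<^sup>2 + 1)"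
    using \<open>1 - c \<noteq> 0\<close> unfolding t_def by simp_all
  then have "circle_param P Q t = (P * c - Q * s, Q * c + P * s)"
    by (rule circle_param_eq_rotation)
  also have "\<dots> = (u, v)"
    using assms(1) unfolding c_def s_def by algebra
  finally show ?thesis
    unfolding t_def c_def s_def .
qed

lemma circle_param_bij:
  assumes "P\<^sup>2 + Q\<^sup>2 = 1"
  shows "bij_betw (circle_param P Q) UNIV ({(u, v). u\<^sup>2 + v\<^sup>2 = 1} - {(P, Q)})"
proof (rule bij_betw_imageI)
  show "inj (circle_param P Q)"
    by (rule injI) (metis assms circle_param_inverse(2) surj_pair)
  have base: "u * P + v * Q \<noteq> 1 \<longleftrightarrow> (u, v) \<noteq> (P, Q)" if "u\<^sup>2 + v\<^sup>2 = 1" for u v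
  proof -
    have "(u - P)\<^sup>2 + (v - Q)\<^sup>2 = 2 * (1 - (u * P + v * Q))"
      using assms that by algebra
    then show ?thesis
      using sum_power2_eq_zero_iff[of "u - P" "v - Q"] by auto
  qed
  show "range (circle_param P Q) = {(u, v). u\<^sup>2 + v\<^sup>2 = 1} - {(P, Q)}"
  proof (intro equalityI subsetI)
    fix z assume "z \<in> range (circle_param P Q)"
    then obtain t u v where "z = (u, v)" "circle_param P Q t = (u, v)"
      by (metis rangeE surj_pair)
    then show "z \<in> {(u, v). u\<^sup>2 + v\<^sup>2 = 1} - {(P, Q)}"
      using base circle_param_on_circle[OF assms] circle_param_inverse(1)[OF assms] by blast
  next
    fix z assume "z \<in> {(u, v). u\<^sup>2 + v\<^sup>2 = 1} - {(P, Q)}"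
    then obtain u v where "z = (u, v)" "u\<^sup>2 + v\<^sup>2 = 1" "(u, v) \<noteq> (P, Q)"
      by blast
    then show "z \<in> range (circle_param P Q)"
      using base circle_param_surj[OF assms] by (metis rangeI)
  qed
qed

section \<open>Counting the normals through a point of the ellipse\<close>

lemma scaled_mem_ellipse_iff:
  "a \<noteq> 0 \<Longrightarrow> b \<noteq> 0 \<Longrightarrow> (a * u, b * v) \<in> ellipse a b \<longleftrightarrow> u\<^sup>2 + v\<^sup>2 = 1"
  by (simp add: ellipse_def power_mult_distrib)

lemma scale_bij_circle_ellipse:
  assumes "a \<noteq> 0" "b \<noteq> 0"
  shows "bij_betw (map_prod ((*) a) ((*) b)) ({(u, v). u\<^sup>2 + v\<^sup>2 = 1} - {(P, Q)})
           (ellipse a b - {(a * P, b * Q)})"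
proof (rule bij_betw_imageI)
  show "inj_on (map_prod ((*) a) ((*) b)) ({(u, v). u\<^sup>2 + v\<^sup>2 = 1} - {(P, Q)})"
    using assms by (intro inj_onI) auto
  show "map_prod ((*) a) ((*) b) ` ({(u, v). u\<^sup>2 + v\<^sup>2 = 1} - {(P, Q)}) = ellipse a b - {(a * P, b * Q)}"
  proof (intro equalityI subsetI)
    fix z assume z: "z \<in> ellipse a b - {(a * P, b * Q)}"
    obtain x y where xy: "z = (x, y)"
      by fastforce
    then have "z = map_prod ((*) a) ((*) b) (x / a, y / b)"
      using assms by simp
    moreover have "(x / a, y / b) \<in> {(u, v). u\<^sup>2 + v\<^sup>2 = 1} - {(P, Q)}"
      using z assms unfolding xy by (auto simp: ellipse_def power_divide)
    ultimately show "z \<in> map_prod ((*) a) ((*) b) ` ({(u, v). u\<^sup>2 + v\<^sup>2 = 1} - {(P, Q)})"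
      by blast
  qed (use assms in \<open>auto simp: scaled_mem_ellipse_iff\<close>)
qed

lemma normal_line_iff:
  assumes "a \<noteq> 0" "b \<noteq> 0" "(x, y) \<noteq> (0, 0)"
  shows "(p, q) \<in> normal_line a b (x, y) \<longleftrightarrow> (p - x) * y * a\<^sup>2 = (q - y) * x * b\<^sup>2"
proof -
  have mem: "(p, q) \<in> normal_line a b (x, y) \<longleftrightarrow>
      (\<exists>t. p = x + t * (x / a\<^sup>2) \<and> q = y + t * (y / b\<^sup>2))"
    unfolding normal_line_def by auto
  show ?thesis
  proof
    assume "(p, q) \<in> normal_line a b (x, y)"
    then show "(p - x) * y * a\<^sup>2 = (q - y) * x * b\<^sup>2"
      unfolding mem using assms(1,2) by auto
  next
    assume eq: "(p - x) * y * a\<^sup>2 = (q - y) * x * b\<^sup>2"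
    show "(p, q) \<in> normal_line a b (x, y)"
    proof (cases "x = 0")
      case True
      then have "y \<noteq> 0" and "p = 0"
        using assms eq by auto
      then show ?thesis
        unfolding mem using True assms(2) by (intro exI[of _ "(q - y) * b\<^sup>2 / y"]) simp
    next
      case False
      then show ?thesis
        unfolding mem using eq assms(1,2)
        by (intro exI[of _ "(p - x) * a\<^sup>2 / x"]) (simp add: field_simps)
    qed
  qed
qed

lemma mem_normal_line_self: "B \<in> normal_line a b B"
  unfolding normal_line_def by (rule CollectI, rule exI[of _ 0]) (simp add: zero_prod_def)

definition normal_cubic_roots :: "real \<Rightarrow> real \<Rightarrow> real \<Rightarrow> real \<Rightarrow> real set" where
  "normal_cubic_roots a b P Q =
     cubic_roots (b\<^sup>2 + (a\<^sup>2 - b\<^sup>2) * Q\<^sup>2) (3 * (a\<^sup>2 - b\<^sup>2) * P * Q)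
       (2 * a\<^sup>2 - b\<^sup>2 - 3 * (a\<^sup>2 - b\<^sup>2) * Q\<^sup>2) (- (a\<^sup>2 - b\<^sup>2) * P * Q)"

lemma normal_at_circle_param_iff:
  assumes "a \<noteq> 0" "b \<noteq> 0" "P\<^sup>2 + Q\<^sup>2 = 1" "circle_param P Q t = (U, V)"
  shows "(a * P, b * Q) \<in> normal_line a b (a * U, b * V) \<longleftrightarrow> t \<in> normal_cubic_roots a b P Q"
proof -
  have "U\<^sup>2 + V\<^sup>2 = 1"
    using circle_param_on_circle assms(3,4) .
  then have "(a * U, b * V) \<noteq> (0, 0)"
    using assms(1,2) by auto
  then have "(a * P, b * Q) \<in> normal_line a b (a * U, b * V) \<longleftrightarrow>
      a * b * (a\<^sup>2 * P * V - b\<^sup>2 * Q * U - (a\<^sup>2 - b\<^sup>2) * U * V) = 0"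
    using assms(1,2) by (simp add: normal_line_iff) algebra
  also have "\<dots> \<longleftrightarrow> (t\<^sup>2 + 1)\<^sup>2 * (a\<^sup>2 * P * V - b\<^sup>2 * Q * U - (a\<^sup>2 - b\<^sup>2) * U * V) = 0"
    using assms(1,2) sq_plus_one_neq_zero[of t] by simp
  also have "\<dots> \<longleftrightarrow> (b\<^sup>2 + (a\<^sup>2 - b\<^sup>2) * Q\<^sup>2) * t ^ 3 + 3 * (a\<^sup>2 - b\<^sup>2) * P * Q * t\<^sup>2
        + (2 * a\<^sup>2 - b\<^sup>2 - 3 * (a\<^sup>2 - b\<^sup>2) * Q\<^sup>2) * t + - (a\<^sup>2 - b\<^sup>2) * P * Q = 0"
  proof -
    have "U * (t\<^sup>2 + 1) = P * (t\<^sup>2 - 1) - 2 * Q * t" "V * (t\<^sup>2 + 1) = Q * (t\<^sup>2 - 1) + 2 * P * t"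
      using assms(4) sq_plus_one_neq_zero[of t] unfolding circle_param_def by auto
    then have "(t\<^sup>2 + 1)\<^sup>2 * (a\<^sup>2 * P * V - b\<^sup>2 * Q * U - (a\<^sup>2 - b\<^sup>2) * U * V) =
      2 * ((b\<^sup>2 + (a\<^sup>2 - b\<^sup>2) * Q\<^sup>2) * t ^ 3 + 3 * (a\<^sup>2 - b\<^sup>2) * P * Q * t\<^sup>2
        + (2 * a\<^sup>2 - b\<^sup>2 - 3 * (a\<^sup>2 - b\<^sup>2) * Q\<^sup>2) * t + - (a\<^sup>2 - b\<^sup>2) * P * Q)"
      using assms(3) by algebra
    then show ?thesis
      by (simp only: mult_eq_0_iff) simp
  qed
  finally show ?thesis
    unfolding normal_cubic_roots_def cubic_roots_def by simp
qed

lemma num_normals_eq_Suc_card: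
  assumes "a \<noteq> 0" "b \<noteq> 0" "P\<^sup>2 + Q\<^sup>2 = 1" "finite (normal_cubic_roots a b P Q)"
  shows "num_normals a b (a * P, b * Q) = Suc (card (normal_cubic_roots a b P Q))"
proof -
  define A where "A = (a * P, b * Q)"
  define g where "g = map_prod ((*) a) ((*) b) \<circ> circle_param P Q"
  have g_bij: "bij_betw g UNIV (ellipse a b - {A})"
    unfolding g_def A_def
    by (rule bij_betw_trans[OF circle_param_bij[OF assms(3)] scale_bij_circle_ellipse[OF assms(1,2)]])
  have normal_g: "A \<in> normal_line a b (g t) \<longleftrightarrow> t \<in> normal_cubic_roots a b P Q" for t
    using normal_at_circle_param_iff[OF assms(1-3)] unfolding A_def g_def
    by (metis comp_apply map_prod_simp surj_pair)
  have g_range: "range g = ellipse a b - {A}" and "inj g"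
    using g_bij unfolding bij_betw_def by auto
  have "A \<in> ellipse a b"
    unfolding A_def using assms(1-3) scaled_mem_ellipse_iff by blast
  then have "{B \<in> ellipse a b. A \<in> normal_line a b B} =
      insert A {B \<in> ellipse a b - {A}. A \<in> normal_line a b B}"
    using mem_normal_line_self[of A a b] by auto
  also have "{B \<in> ellipse a b - {A}. A \<in> normal_line a b B} = g ` normal_cubic_roots a b P Q"
    unfolding g_range[symmetric] using normal_g by auto
  finally have "{B \<in> ellipse a b. A \<in> normal_line a b B} = insert A (g ` normal_cubic_roots a b P Q)" .
  moreover have "A \<notin> g ` normal_cubic_roots a b P Q"
    using g_range by auto
  moreover have "card (g ` normal_cubic_roots a b P Q) = card (normal_cubic_roots a b P Q)"
    using \<open>inj g\<close> by (simp add: card_image inj_on_subset)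
  ultimately show ?thesis
    using assms(4) unfolding num_normals_def A_def by simp
qed

lemma card_normal_cubic_roots:
  assumes "a \<noteq> 0" "b \<noteq> 0" "P\<^sup>2 + Q\<^sup>2 = 1"
  shows "b\<^sup>2 * (2 * a\<^sup>2 - b\<^sup>2) ^ 3 < (a\<^sup>2 - b\<^sup>2) * (a\<^sup>2 + b\<^sup>2) ^ 3 * Q\<^sup>2 \<Longrightarrow>
           card (normal_cubic_roots a b P Q) = 3"
    and "(a\<^sup>2 - b\<^sup>2) * (a\<^sup>2 + b\<^sup>2) ^ 3 * Q\<^sup>2 < b\<^sup>2 * (2 * a\<^sup>2 - b\<^sup>2) ^ 3 \<Longrightarrow>
           card (normal_cubic_roots a b P Q) = 1"
proof -
  have "b\<^sup>2 + (a\<^sup>2 - b\<^sup>2) * Q\<^sup>2 = a\<^sup>2 * Q\<^sup>2 + b\<^sup>2 * P\<^sup>2"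
    using assms(3) by algebra
  also have "\<dots> > 0"
    using assms by (cases "Q = 0") (simp_all add: add_pos_nonneg)
  finally have lead: "b\<^sup>2 + (a\<^sup>2 - b\<^sup>2) * Q\<^sup>2 \<noteq> 0"
    by simp
  have discr: "cubic_discrim (b\<^sup>2 + (a\<^sup>2 - b\<^sup>2) * Q\<^sup>2) (3 * (a\<^sup>2 - b\<^sup>2) * P * Q)
      (2 * a\<^sup>2 - b\<^sup>2 - 3 * (a\<^sup>2 - b\<^sup>2) * Q\<^sup>2) (- (a\<^sup>2 - b\<^sup>2) * P * Q)
      = 4 * ((a\<^sup>2 - b\<^sup>2) * (a\<^sup>2 + b\<^sup>2) ^ 3 * Q\<^sup>2 - b\<^sup>2 * (2 * a\<^sup>2 - b\<^sup>2) ^ 3)"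
    unfolding cubic_discrim_def using assms(3) by algebra
  show "card (normal_cubic_roots a b P Q) = 3"
    if "b\<^sup>2 * (2 * a\<^sup>2 - b\<^sup>2) ^ 3 < (a\<^sup>2 - b\<^sup>2) * (a\<^sup>2 + b\<^sup>2) ^ 3 * Q\<^sup>2"
    unfolding normal_cubic_roots_def by (rule card_cubic_roots(2)[OF lead], unfold discr) (use that in simp)
  show "card (normal_cubic_roots a b P Q) = 1"
    if "(a\<^sup>2 - b\<^sup>2) * (a\<^sup>2 + b\<^sup>2) ^ 3 * Q\<^sup>2 < b\<^sup>2 * (2 * a\<^sup>2 - b\<^sup>2) ^ 3"
    unfolding normal_cubic_roots_def by (rule card_cubic_roots(1)[OF lead], unfold discr) (use that in simp)
qed

lemma evolute_denominator_pos:
  fixes a b :: real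
  assumes "0 < b" "b < a"
  shows "0 < (a\<^sup>2 - b\<^sup>2) * (a\<^sup>2 + b\<^sup>2) ^ 3"
proof -
  have "b\<^sup>2 < a\<^sup>2"
    using assms by (simp add: power_strict_mono)
  then show ?thesis
    using assms(1) by (simp add: add_nonneg_pos)
qed

lemma num_normals_off_evolute:
  assumes "0 < b" "b < a" "(p, q) \<in> ellipse a b"
  defines "h \<equiv> b ^ 4 * (2 * a\<^sup>2 - b\<^sup>2) ^ 3 / ((a\<^sup>2 - b\<^sup>2) * (a\<^sup>2 + b\<^sup>2) ^ 3)"
  shows "h < q\<^sup>2 \<Longrightarrow> num_normals a b (p, q) = 4"
    and "q\<^sup>2 < h \<Longrightarrow> num_normals a b (p, q) = 2"
proof -
  define P Q where "P = p / a" and "Q = q / b"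
  have "a \<noteq> 0" "b \<noteq> 0"
    using assms(1,2) by auto
  then have pq: "(p, q) = (a * P, b * Q)"
    unfolding P_def Q_def by simp
  have circle: "P\<^sup>2 + Q\<^sup>2 = 1"
    using assms(3) unfolding P_def Q_def ellipse_def by (simp add: power_divide)
  have "0 < (a\<^sup>2 - b\<^sup>2) * (a\<^sup>2 + b\<^sup>2) ^ 3"
    using assms(1,2) by (rule evolute_denominator_pos)
  then have "h < q\<^sup>2 \<longleftrightarrow> b\<^sup>2 * (2 * a\<^sup>2 - b\<^sup>2) ^ 3 < (a\<^sup>2 - b\<^sup>2) * (a\<^sup>2 + b\<^sup>2) ^ 3 * Q\<^sup>2"
    and "q\<^sup>2 < h \<longleftrightarrow> (a\<^sup>2 - b\<^sup>2) * (a\<^sup>2 + b\<^sup>2) ^ 3 * Q\<^sup>2 < b\<^sup>2 * (2 * a\<^sup>2 - b\<^sup>2) ^ 3"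
    using assms(1) unfolding h_def Q_def by (simp_all add: field_simps)
  with card_normal_cubic_roots[OF \<open>a \<noteq> 0\<close> \<open>b \<noteq> 0\<close> circle]
    num_normals_eq_Suc_card[OF \<open>a \<noteq> 0\<close> \<open>b \<noteq> 0\<close> circle] card_ge_0_finite
  show "h < q\<^sup>2 \<Longrightarrow> num_normals a b (p, q) = 4" and "q\<^sup>2 < h \<Longrightarrow> num_normals a b (p, q) = 2"
    unfolding pq by fastforce+
qed

(* For a^2 = 2 b^2 the covertices lie on the evolute: there the discriminant vanishes and the
   cubic degenerates to 2 b^2 t^3. *)
lemma num_normals_covertex:
  assumes "a \<noteq> 0" "b \<noteq> 0" "a\<^sup>2 \<le> 2 * b\<^sup>2" "q\<^sup>2 = b\<^sup>2"
  shows "num_normals a b (0, q) = 2"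
proof -
  define Q where "Q = q / b"
  have "Q\<^sup>2 = 1"
    using assms(2,4) unfolding Q_def by (simp add: power_divide)
  have "normal_cubic_roots a b 0 Q = {0}"
  proof (intro equalityI subsetI)
    fix t assume "t \<in> normal_cubic_roots a b 0 Q"
    then have "(b\<^sup>2 + (a\<^sup>2 - b\<^sup>2) * Q\<^sup>2) * t ^ 3 + (2 * a\<^sup>2 - b\<^sup>2 - 3 * (a\<^sup>2 - b\<^sup>2) * Q\<^sup>2) * t = 0"
      unfolding normal_cubic_roots_def cubic_roots_def by simp
    then have "t * (a\<^sup>2 * t\<^sup>2 + (2 * b\<^sup>2 - a\<^sup>2)) = 0"
      using \<open>Q\<^sup>2 = 1\<close> by algebra
    moreover have "t \<noteq> 0 \<Longrightarrow> 0 < a\<^sup>2 * t\<^sup>2 + (2 * b\<^sup>2 - a\<^sup>2)"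
      using assms(1,3) by (simp add: add_pos_nonneg)
    ultimately show "t \<in> {0}"
      by fastforce
  qed (simp add: normal_cubic_roots_def cubic_roots_def)
  then have "num_normals a b (a * 0, b * Q) = 2"
    using num_normals_eq_Suc_card[OF assms(1,2), of 0 Q] \<open>Q\<^sup>2 = 1\<close> by simp
  then show ?thesis
    using assms(2) unfolding Q_def by simp
qed

lemma evolute_identity:
  fixes a b :: "'a::comm_ring_1"
  shows "a\<^sup>2 * (a\<^sup>2 - 2 * b\<^sup>2) ^ 3 + b\<^sup>2 * (2 * a\<^sup>2 - b\<^sup>2) ^ 3 = (a\<^sup>2 - b\<^sup>2) * (a\<^sup>2 + b\<^sup>2) ^ 3"
  by (simp add: algebra_simps power2_eq_square power3_eq_cube)

lemma b_sq_le_evolute_threshold: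
  fixes a b :: real
  assumes "0 < b" "b < a" "a\<^sup>2 \<le> 2 * b\<^sup>2"
  shows "b\<^sup>2 \<le> b ^ 4 * (2 * a\<^sup>2 - b\<^sup>2) ^ 3 / ((a\<^sup>2 - b\<^sup>2) * (a\<^sup>2 + b\<^sup>2) ^ 3)"
proof -
  have k: "0 < (a\<^sup>2 - b\<^sup>2) * (a\<^sup>2 + b\<^sup>2) ^ 3"
    using assms(1,2) by (rule evolute_denominator_pos)
  have "a\<^sup>2 * (a\<^sup>2 - 2 * b\<^sup>2) ^ 3 \<le> 0"
    using assms(3) by (simp add: mult_nonneg_nonpos power_le_zero_eq)
  then have "(a\<^sup>2 - b\<^sup>2) * (a\<^sup>2 + b\<^sup>2) ^ 3 \<le> b\<^sup>2 * (2 * a\<^sup>2 - b\<^sup>2) ^ 3"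
    using evolute_identity[of a b] by linarith
  then have "b\<^sup>2 * ((a\<^sup>2 - b\<^sup>2) * (a\<^sup>2 + b\<^sup>2) ^ 3) \<le> b\<^sup>2 * (b\<^sup>2 * (2 * a\<^sup>2 - b\<^sup>2) ^ 3)"
    using zero_le_power2 by (rule mult_left_mono)
  also have "\<dots> = b ^ 4 * (2 * a\<^sup>2 - b\<^sup>2) ^ 3"
    by (simp add: power4_eq_xxxx power2_eq_square)
  finally show ?thesis
    using k by (simp add: pos_le_divide_eq)
qed

lemma num_normals_eq_two_if_a_sq_le_two_b_sq:
  assumes "0 < b" "b < a" "a\<^sup>2 \<le> 2 * b\<^sup>2" "A \<in> ellipse a b"
  shows "num_normals a b A = 2"
proof -
  obtain p q where A: "A = (p, q)"
    by fastforce
  have on_ellipse: "p\<^sup>2 / a\<^sup>2 + q\<^sup>2 / b\<^sup>2 = 1"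
    using assms(4) unfolding A ellipse_def by simp
  show ?thesis
  proof (cases "q\<^sup>2 = b\<^sup>2")
    case True
    then have "p = 0"
      using on_ellipse assms(1,2) by simp
    then show ?thesis
      unfolding A using num_normals_covertex assms(1-3) True by simp
  next
    case False
    have "0 \<le> p\<^sup>2 / a\<^sup>2"
      by simp
    then have "q\<^sup>2 / b\<^sup>2 \<le> 1"
      using on_ellipse by linarith
    then have "q\<^sup>2 < b\<^sup>2"
      using False assms(1) by simp
    with b_sq_le_evolute_threshold[OF assms(1-3)] show ?thesis
      unfolding A using num_normals_off_evolute(2) assms(1,2,4) A by simp
  qed
qed

section \<open>Arcs of the ellipse\<close>

lemma components_eq_of_open_cover:
  fixes S :: "'a::topological_space set" and \<U> :: "'a set set"
  assumes "\<And>U. U \<in> \<U> \<Longrightarrow> open U" "S \<subseteq> \<Union>\<U>"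
    and "\<And>U V. U \<in> \<U> \<Longrightarrow> V \<in> \<U> \<Longrightarrow> U \<noteq> V \<Longrightarrow> S \<inter> U \<inter> V = {}"
    and "\<And>U. U \<in> \<U> \<Longrightarrow> connected (S \<inter> U)" "\<And>U. U \<in> \<U> \<Longrightarrow> S \<inter> U \<noteq> {}"
  shows "components S = (\<lambda>U. S \<inter> U) ` \<U>"
proof -
  have component_eq: "C = S \<inter> U" if C: "C \<in> components S" and U: "U \<in> \<U>" and "C \<inter> U \<noteq> {}" for C U
  proof
    let ?V = "\<Union>(\<U> - {U})"
    have "C \<subseteq> S"
      using C by (rule in_components_subset)
    then have cover: "C \<subseteq> U \<union> ?V"
      using assms(2) by blast
    have disjoint: "U \<inter> ?V \<inter> C = {}"
      using assms(3) U \<open>C \<subseteq> S\<close> by blast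
    have "U \<inter> C = {} \<or> ?V \<inter> C = {}"
      using assms(1) U by (intro connectedD[OF in_components_connected[OF C] _ _ disjoint cover]) auto
    then show "C \<subseteq> S \<inter> U"
      using \<open>C \<subseteq> U \<union> ?V\<close> \<open>C \<subseteq> S\<close> \<open>C \<inter> U \<noteq> {}\<close> by auto
    show "S \<inter> U \<subseteq> C"
      using components_maximal[OF C assms(4)[OF U]] \<open>C \<subseteq> S\<close> \<open>C \<inter> U \<noteq> {}\<close> by blast
  qed
  show ?thesis
  proof (intro equalityI subsetI)
    fix C assume C: "C \<in> components S"
    then obtain x where "x \<in> C"
      using in_components_nonempty by blast
    then obtain U where "U \<in> \<U>" "x \<in> U"
      using assms(2) in_components_subset[OF C] by blast
    then show "C \<in> (\<lambda>U. S \<inter> U) ` \<U>"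
      using component_eq[OF C] \<open>x \<in> C\<close> by blast
  next
    fix C assume "C \<in> (\<lambda>U. S \<inter> U) ` \<U>"
    then obtain U where U: "U \<in> \<U>" "C = S \<inter> U"
      by blast
    then obtain x where x: "x \<in> S \<inter> U"
      using assms(5) by blast
    then have "connected_component_set S x \<in> components S"
      by (simp add: componentsI)
    moreover have "x \<in> connected_component_set S x \<inter> U"
      using x by simp
    ultimately show "C \<in> components S"
      using component_eq[OF _ U(1)] U(2) by (metis empty_iff)
  qed
qed

lemma image_involution_eq: "(\<And>x. f (f x) = x) \<Longrightarrow> f ` A = {x. f x \<in> A}"
  by (auto simp: image_iff) (metis)

lemma connected_ellipse_upper_cap:
  assumes "0 < a" "0 < b" "0 \<le> h" "h < b"
  shows "connected (ellipse a b \<inter> {z. h < snd z})"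
proof -
  define m where "m = a * sqrt (1 - h\<^sup>2 / b\<^sup>2)"
  define f where "f x = (x, b * sqrt (1 - x\<^sup>2 / a\<^sup>2))" for x
  have above_iff: "h < b * sqrt (1 - x\<^sup>2 / a\<^sup>2) \<longleftrightarrow> \<bar>x\<bar> < m" for x
  proof -
    have "h < b * sqrt (1 - x\<^sup>2 / a\<^sup>2) \<longleftrightarrow> sqrt (h\<^sup>2 / b\<^sup>2) < sqrt (1 - x\<^sup>2 / a\<^sup>2)"
      using assms by (simp add: real_sqrt_divide field_simps)
    also have "\<dots> \<longleftrightarrow> x\<^sup>2 < a\<^sup>2 * (1 - h\<^sup>2 / b\<^sup>2)"
      using assms(1) by (simp add: field_simps)
    also have "\<dots> \<longleftrightarrow> \<bar>x\<bar> < m"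
      unfolding m_def using assms(1) by (metis real_sqrt_less_iff real_sqrt_abs real_sqrt_mult abs_of_pos)
    finally show ?thesis .
  qed
  have "ellipse a b \<inter> {z. h < snd z} = f ` {-m<..<m}"
  proof (intro equalityI subsetI)
    fix z assume z: "z \<in> ellipse a b \<inter> {z. h < snd z}"
    obtain x y where xy: "z = (x, y)"
      by fastforce
    have "y\<^sup>2 = b\<^sup>2 * (1 - x\<^sup>2 / a\<^sup>2)"
      using z assms(2) unfolding xy ellipse_def by (simp add: field_simps)
    moreover have "0 \<le> y"
      using z assms(3) unfolding xy by simp
    ultimately have "y = b * sqrt (1 - x\<^sup>2 / a\<^sup>2)"
      using assms(2) by (metis abs_of_nonneg less_imp_le real_sqrt_abs real_sqrt_mult)
    then show "z \<in> f ` {-m<..<m}"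
      using z above_iff[of x] unfolding xy f_def by (auto simp: abs_less_iff)
  next
    fix z assume "z \<in> f ` {-m<..<m}"
    then obtain x where "x \<in> {-m<..<m}" and z: "z = f x"
      by blast
    then have above: "h < b * sqrt (1 - x\<^sup>2 / a\<^sup>2)"
      using above_iff by (auto simp: abs_less_iff)
    then have "0 < b * sqrt (1 - x\<^sup>2 / a\<^sup>2)"
      using assms(3) by linarith
    then have "0 < 1 - x\<^sup>2 / a\<^sup>2"
      using assms(2) by (simp add: zero_less_mult_iff)
    then show "z \<in> ellipse a b \<inter> {z. h < snd z}"
      using above assms(2) unfolding z f_def ellipse_def by (simp add: power_mult_distrib)
  qed
  moreover have "continuous_on {-m<..<m} f"
    unfolding f_def using assms(1) by (intro continuous_intros) auto
  ultimately show ?thesis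
    by (metis connected_Ioo connected_continuous_image)
qed

lemma connected_ellipse_arcs:
  assumes "0 < a" "0 < b" "0 \<le> h"
  shows "h < b \<Longrightarrow> connected (ellipse a b \<inter> {z. h < snd z})"
    and "h < b \<Longrightarrow> connected (ellipse a b \<inter> {z. snd z < -h})"
    and "h < a \<Longrightarrow> connected (ellipse a b \<inter> {z. h < fst z})"
    and "h < a \<Longrightarrow> connected (ellipse a b \<inter> {z. fst z < -h})"
proof -
  have reflect_snd: "ellipse a b \<inter> {z. snd z < -h} =
      (\<lambda>z. (fst z, - snd z)) ` (ellipse a b \<inter> {z. h < snd z})"
    by (subst image_involution_eq) (auto simp: ellipse_def)
  have reflect_fst: "ellipse a b \<inter> {z. fst z < -h} =
      (\<lambda>z. (- fst z, snd z)) ` (ellipse a b \<inter> {z. h < fst z})"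
    by (subst image_involution_eq) (auto simp: ellipse_def)
  have swap: "ellipse a b \<inter> {z. h < fst z} = prod.swap ` (ellipse b a \<inter> {z. h < snd z})"
    by (subst image_involution_eq) (auto simp: ellipse_def)
  show upper: "connected (ellipse a b \<inter> {z. h < snd z})" if "h < b"
    using connected_ellipse_upper_cap assms that .
  show "connected (ellipse a b \<inter> {z. snd z < -h})" if "h < b"
    unfolding reflect_snd by (intro connected_continuous_image upper that continuous_intros)
  show right: "connected (ellipse a b \<inter> {z. h < fst z})" if "h < a"
    unfolding swap using assms that
    by (intro connected_continuous_image connected_ellipse_upper_cap continuous_intros)
  show "connected (ellipse a b \<inter> {z. fst z < -h})" if "h < a"
    unfolding reflect_fst by (intro connected_continuous_image right that continuous_intros)
qed

lemma ellipse_sq_compare: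
  assumes "a \<noteq> 0" "b \<noteq> 0" "x0\<^sup>2 / a\<^sup>2 + y0\<^sup>2 / b\<^sup>2 = 1" "(x, y) \<in> ellipse a b"
  shows "y0\<^sup>2 < y\<^sup>2 \<longleftrightarrow> x\<^sup>2 < x0\<^sup>2" and "y\<^sup>2 = y0\<^sup>2 \<longleftrightarrow> x\<^sup>2 = x0\<^sup>2"
proof -
  have eq: "(x0\<^sup>2 - x\<^sup>2) / a\<^sup>2 = (y\<^sup>2 - y0\<^sup>2) / b\<^sup>2"
    using assms(3,4) unfolding ellipse_def by (simp add: diff_divide_distrib)
  have "0 < a\<^sup>2" "0 < b\<^sup>2"
    using assms(1,2) by simp_all
  then show "y0\<^sup>2 < y\<^sup>2 \<longleftrightarrow> x\<^sup>2 < x0\<^sup>2"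
    using eq by (metis diff_gt_0_iff_gt zero_less_divide_iff not_less_iff_gr_or_eq)
  show "y\<^sup>2 = y0\<^sup>2 \<longleftrightarrow> x\<^sup>2 = x0\<^sup>2"
    using eq assms(1,2) by (metis divide_eq_0_iff eq_iff_diff_eq_0 power_eq_0_iff)
qed

lemma less_abs_iff_sq_less:
  fixes c u :: real
  shows "0 \<le> c \<Longrightarrow> c < \<bar>u\<bar> \<longleftrightarrow> c\<^sup>2 < u\<^sup>2"
  using abs_le_square_iff[of u c] by (auto simp: not_le[symmetric])

lemma abs_less_iff_sq_less:
  fixes c u :: real
  shows "0 \<le> c \<Longrightarrow> \<bar>u\<bar> < c \<longleftrightarrow> u\<^sup>2 < c\<^sup>2"
  using abs_le_square_iff[of c u] by (auto simp: not_le[symmetric])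

lemma abs_eq_iff_sq_eq:
  fixes c u :: real
  shows "0 \<le> c \<Longrightarrow> \<bar>u\<bar> = c \<longleftrightarrow> u\<^sup>2 = c\<^sup>2"
  by (metis abs_ge_zero power2_abs power2_eq_iff_nonneg)

lemma ellipse_abs_compare:
  assumes "a \<noteq> 0" "b \<noteq> 0" "0 \<le> x0" "0 \<le> y0" "x0\<^sup>2 / a\<^sup>2 + y0\<^sup>2 / b\<^sup>2 = 1"
    and "(x, y) \<in> ellipse a b"
  shows "y0 < \<bar>y\<bar> \<longleftrightarrow> \<bar>x\<bar> < x0" and "\<bar>y\<bar> = y0 \<longleftrightarrow> \<bar>x\<bar> = x0"
  using ellipse_sq_compare[OF assms(1,2,5,6)] less_abs_iff_sq_less[OF assms(4)]
    abs_less_iff_sq_less[OF assms(3)] abs_eq_iff_sq_eq[OF assms(3)] abs_eq_iff_sq_eq[OF assms(4)]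
  by simp_all

lemma ellipse_minus_four_points_cover:
  assumes "a \<noteq> 0" "b \<noteq> 0" "0 \<le> x0" "0 \<le> y0" "x0\<^sup>2 / a\<^sup>2 + y0\<^sup>2 / b\<^sup>2 = 1"
    and "(x, y) \<in> ellipse a b - {(x0, y0), (-x0, y0), (x0, -y0), (-x0, -y0)}"
  shows "y0 < \<bar>y\<bar> \<or> x0 < \<bar>x\<bar>"
proof (rule ccontr)
  assume "\<not> (y0 < \<bar>y\<bar> \<or> x0 < \<bar>x\<bar>)"
  moreover note compare = ellipse_abs_compare[OF assms(1-5), of x y]
  ultimately have "\<bar>x\<bar> = x0" "\<bar>y\<bar> = y0"
    using assms(6) by auto
  then show False
    using assms(6) by (auto simp: abs_if split: if_splits)
qed

lemma four_points_lt_semi_axes: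
  fixes a b x0 y0 :: real
  assumes "0 < a" "0 < b" "0 < x0" "0 < y0" "x0\<^sup>2 / a\<^sup>2 + y0\<^sup>2 / b\<^sup>2 = 1"
  shows "x0 < a" and "y0 < b"
proof -
  have "0 < x0\<^sup>2 / a\<^sup>2" "0 < y0\<^sup>2 / b\<^sup>2"
    using assms by simp_all
  then have "x0\<^sup>2 / a\<^sup>2 < 1" "y0\<^sup>2 / b\<^sup>2 < 1"
    using assms(5) by linarith+
  then show "x0 < a" "y0 < b"
    using assms(1,2) by (simp_all add: power_less_imp_less_base)
qed

lemma components_ellipse_minus_four_points:
  assumes "0 < a" "0 < b" "0 < x0" "0 < y0" "x0\<^sup>2 / a\<^sup>2 + y0\<^sup>2 / b\<^sup>2 = 1"
  defines "S \<equiv> ellipse a b - {(x0, y0), (-x0, y0), (x0, -y0), (-x0, -y0)}"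
    and "T \<equiv> ellipse a b \<inter> {z. y0 < snd z}" and "B \<equiv> ellipse a b \<inter> {z. snd z < -y0}"
    and "R \<equiv> ellipse a b \<inter> {z. x0 < fst z}" and "L \<equiv> ellipse a b \<inter> {z. fst z < -x0}"
  shows "components S = {T, B, R, L}" and "card (components S) = 4"
proof -
  define \<U> :: "(real \<times> real) set set"
    where "\<U> = {{z. y0 < snd z}, {z. snd z < -y0}, {z. x0 < fst z}, {z. fst z < -x0}}"
  have x0_y0: "0 \<le> x0" "0 \<le> y0" "x0 < a" "y0 < b"
    using assms(3,4) four_points_lt_semi_axes[OF assms(1-5)] by simp_all
  have witnesses: "(0, b) \<in> T" "(0, -b) \<in> B" "(a, 0) \<in> R" "(-a, 0) \<in> L"
    using assms(1,2) x0_y0 unfolding T_def B_def R_def L_def by (simp_all add: ellipse_def)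
  have S_inter: "S \<inter> U = ellipse a b \<inter> U" if "U \<in> \<U>" for U
    using that assms(3,4) unfolding \<U>_def S_def by auto
  have "components S = (\<lambda>U. S \<inter> U) ` \<U>"
  proof (rule components_eq_of_open_cover)
    show "open U" if "U \<in> \<U>" for U
      using that unfolding \<U>_def
      by (auto intro!: open_Collect_less continuous_on_const continuous_on_fst continuous_on_snd continuous_on_id continuous_on_minus)
    show "S \<subseteq> \<Union>\<U>"
    proof
      fix z assume "z \<in> S"
      then have "y0 < \<bar>snd z\<bar> \<or> x0 < \<bar>fst z\<bar>"
        using ellipse_minus_four_points_cover[OF _ _ x0_y0(1,2) assms(5), of "fst z" "snd z"] assms(1,2)
        unfolding S_def by simp
      then show "z \<in> \<Union>\<U>"
        unfolding \<U>_def by (auto simp: abs_if split: if_splits)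
    qed
    show "S \<inter> U \<inter> V = {}" if "U \<in> \<U>" "V \<in> \<U>" "U \<noteq> V" for U V
    proof (rule ccontr)
      assume "S \<inter> U \<inter> V \<noteq> {}"
      then obtain z where z: "z \<in> ellipse a b" "z \<in> U" "z \<in> V"
        unfolding S_def by blast
      have "\<not> (y0 < \<bar>snd z\<bar> \<and> x0 < \<bar>fst z\<bar>)"
        using ellipse_abs_compare(1)[OF _ _ x0_y0(1,2) assms(5), of "fst z" "snd z"] assms(1,2) z(1)
        by auto
      then show False
        using that z(2,3) assms(3,4) unfolding \<U>_def by auto
    qed
    have "connected (ellipse a b \<inter> {z. y0 < snd z})" "connected (ellipse a b \<inter> {z. snd z < -y0})"
      using connected_ellipse_arcs(1,2)[OF assms(1,2) x0_y0(2,4)] .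
    moreover have "connected (ellipse a b \<inter> {z. x0 < fst z})" "connected (ellipse a b \<inter> {z. fst z < -x0})"
      using connected_ellipse_arcs(3,4)[OF assms(1,2) x0_y0(1,3)] .
    ultimately show "connected (S \<inter> U)" if "U \<in> \<U>" for U
      unfolding S_inter[OF that] using that unfolding \<U>_def by blast
    show "S \<inter> U \<noteq> {}" if "U \<in> \<U>" for U
      unfolding S_inter[OF that] using that witnesses unfolding \<U>_def T_def B_def R_def L_def by blast
  qed
  also have "\<dots> = (\<lambda>U. ellipse a b \<inter> U) ` \<U>"
    using S_inter by (rule image_cong[OF refl])
  finally show components: "components S = {T, B, R, L}"
    unfolding \<U>_def T_def B_def R_def L_def by simp
  have "(0, b) \<notin> B \<union> R \<union> L" "(0, -b) \<notin> R \<union> L" "(a, 0) \<notin> L"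
    using assms unfolding B_def R_def L_def by auto
  then have "T \<noteq> B" "T \<noteq> R" "T \<noteq> L" "B \<noteq> R" "B \<noteq> L" "R \<noteq> L"
    using witnesses by blast+
  then show "card (components S) = 4"
    unfolding components by simp
qed

lemma evolute_points_on_ellipse:
  assumes "0 < b" "b < a" "2 * b\<^sup>2 < a\<^sup>2"
  defines "x0 \<equiv> sqrt (a ^ 4 * (a\<^sup>2 - 2 * b\<^sup>2) ^ 3 / ((a\<^sup>2 - b\<^sup>2) * (a\<^sup>2 + b\<^sup>2) ^ 3))"
    and "y0 \<equiv> sqrt (b ^ 4 * (2 * a\<^sup>2 - b\<^sup>2) ^ 3 / ((a\<^sup>2 - b\<^sup>2) * (a\<^sup>2 + b\<^sup>2) ^ 3))"
  shows "0 < x0" and "0 < y0"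
    and "y0\<^sup>2 = b ^ 4 * (2 * a\<^sup>2 - b\<^sup>2) ^ 3 / ((a\<^sup>2 - b\<^sup>2) * (a\<^sup>2 + b\<^sup>2) ^ 3)"
    and "x0\<^sup>2 / a\<^sup>2 + y0\<^sup>2 / b\<^sup>2 = 1"
proof -
  have k: "0 < (a\<^sup>2 - b\<^sup>2) * (a\<^sup>2 + b\<^sup>2) ^ 3"
    using assms(1,2) by (rule evolute_denominator_pos)
  have "0 < 2 * a\<^sup>2 - b\<^sup>2" "0 < a\<^sup>2 - 2 * b\<^sup>2"
    using assms(3) zero_le_power2[of b] by linarith+
  then have x0: "x0\<^sup>2 = a ^ 4 * (a\<^sup>2 - 2 * b\<^sup>2) ^ 3 / ((a\<^sup>2 - b\<^sup>2) * (a\<^sup>2 + b\<^sup>2) ^ 3)"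
    and y0: "y0\<^sup>2 = b ^ 4 * (2 * a\<^sup>2 - b\<^sup>2) ^ 3 / ((a\<^sup>2 - b\<^sup>2) * (a\<^sup>2 + b\<^sup>2) ^ 3)"
    and "0 < x0" "0 < y0"
    unfolding x0_def y0_def using k assms(1,2) by simp_all
  then show "0 < x0" "0 < y0"
    and "y0\<^sup>2 = b ^ 4 * (2 * a\<^sup>2 - b\<^sup>2) ^ 3 / ((a\<^sup>2 - b\<^sup>2) * (a\<^sup>2 + b\<^sup>2) ^ 3)"
    by simp_all
  have "x0\<^sup>2 / a\<^sup>2 + y0\<^sup>2 / b\<^sup>2 =
      (a\<^sup>2 * (a\<^sup>2 - 2 * b\<^sup>2) ^ 3 + b\<^sup>2 * (2 * a\<^sup>2 - b\<^sup>2) ^ 3) / ((a\<^sup>2 - b\<^sup>2) * (a\<^sup>2 + b\<^sup>2) ^ 3)"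
    unfolding x0 y0 using assms(1,2) by (simp add: power4_eq_xxxx power2_eq_square add_divide_distrib)
  then show "x0\<^sup>2 / a\<^sup>2 + y0\<^sup>2 / b\<^sup>2 = 1"
    using k unfolding evolute_identity by (metis divide_self order_less_irrefl)
qed

lemma num_normals_on_arcs:
  assumes "0 < b" "b < a" "0 < x0" "0 < y0" "x0\<^sup>2 / a\<^sup>2 + y0\<^sup>2 / b\<^sup>2 = 1"
    and "y0\<^sup>2 = b ^ 4 * (2 * a\<^sup>2 - b\<^sup>2) ^ 3 / ((a\<^sup>2 - b\<^sup>2) * (a\<^sup>2 + b\<^sup>2) ^ 3)"
  shows "A \<in> ellipse a b \<inter> {z. y0 < snd z} \<union> ellipse a b \<inter> {z. snd z < -y0} \<Longrightarrow>
           num_normals a b A = 4"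
    and "A \<in> ellipse a b \<inter> {z. x0 < fst z} \<union> ellipse a b \<inter> {z. fst z < -x0} \<Longrightarrow>
           num_normals a b A = 2"
proof -
  show "num_normals a b A = 4"
    if "A \<in> ellipse a b \<inter> {z. y0 < snd z} \<union> ellipse a b \<inter> {z. snd z < -y0}"
  proof -
    have "y0 < \<bar>snd A\<bar>"
      using that by auto
    then have "y0\<^sup>2 < (snd A)\<^sup>2"
      using less_abs_iff_sq_less assms(4) by simp
    then show ?thesis
      using num_normals_off_evolute(1)[OF assms(1,2), of "fst A" "snd A"] assms(6) that by auto
  qed
  show "num_normals a b A = 2"
    if "A \<in> ellipse a b \<inter> {z. x0 < fst z} \<union> ellipse a b \<inter> {z. fst z < -x0}"
  proof -
    have "(fst A, snd A) \<in> ellipse a b" "x0 < \<bar>fst A\<bar>"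
      using that by auto
    then have "\<bar>snd A\<bar> < y0"
      using ellipse_abs_compare[OF _ _ _ _ assms(5)] assms(1-4) by fastforce
    then have "(snd A)\<^sup>2 < y0\<^sup>2"
      using abs_less_iff_sq_less assms(4) by simp
    then show ?thesis
      using num_normals_off_evolute(2)[OF assms(1,2), of "fst A" "snd A"] assms(6) that by auto
  qed
qed

theorem theorem1:
  fixes a b :: real
  assumes "a > b" and "b > 0"
  defines "x0 \<equiv> sqrt (a^4 * (a\<^sup>2 - 2 * b\<^sup>2)^3 / ((a\<^sup>2 - b\<^sup>2) * (a\<^sup>2 + b\<^sup>2)^3))"
      and "y0 \<equiv> sqrt (b^4 * (2 * a\<^sup>2 - b\<^sup>2)^3 / ((a\<^sup>2 - b\<^sup>2) * (a\<^sup>2 + b\<^sup>2)^3))"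
  defines "P \<equiv> {(x0, y0), (-x0, y0), (x0, -y0), (-x0, -y0)}"
  shows "(a\<^sup>2 > 2 * b\<^sup>2 \<longrightarrow>
            P \<subseteq> ellipse a b
          \<and> card (components (ellipse a b - P)) = 4
          \<and> (\<forall>C \<in> components (ellipse a b - P).
               (\<forall>A \<in> C. num_normals a b A = 4) \<or> (\<forall>A \<in> C. num_normals a b A = 2))
          \<and> (\<exists>C \<in> components (ellipse a b - P). \<forall>A \<in> C. num_normals a b A = 4)
          \<and> (\<exists>C \<in> components (ellipse a b - P). \<forall>A \<in> C. num_normals a b A = 2))
       \<and> (a\<^sup>2 \<le> 2 * b\<^sup>2 \<longrightarrow> (\<forall>A \<in> ellipse a b. num_normals a b A = 2))"
proof (intro conjI impI)
  show "\<forall>A \<in> ellipse a b. num_normals a b A = 2" if "a\<^sup>2 \<le> 2 * b\<^sup>2"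
    using num_normals_eq_two_if_a_sq_le_two_b_sq[OF assms(2,1) that] by blast
  assume "2 * b\<^sup>2 < a\<^sup>2"
  note evolute = evolute_points_on_ellipse[OF assms(2,1) this, folded x0_def y0_def]
  then show "P \<subseteq> ellipse a b"
    unfolding P_def ellipse_def by simp
  have "0 < a"
    using assms by linarith
  note arcs = components_ellipse_minus_four_points[OF \<open>0 < a\<close> assms(2) evolute(1,2,4), folded P_def]
  note normal_counts = num_normals_on_arcs[OF assms(2,1) evolute(1,2,4,3)]
  show "card (components (ellipse a b - P)) = 4"
    using arcs(2) .
  show "\<forall>C \<in> components (ellipse a b - P).
          (\<forall>A \<in> C. num_normals a b A = 4) \<or> (\<forall>A \<in> C. num_normals a b A = 2)"
    unfolding arcs(1) using normal_counts by blast
  show "\<exists>C \<in> components (ellipse a b - P). \<forall>A \<in> C. num_normals a b A = 4"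
    unfolding arcs(1) using normal_counts(1) by blast
  show "\<exists>C \<in> components (ellipse a b - P). \<forall>A \<in> C. num_normals a b A = 2"
    unfolding arcs(1) using normal_counts(2) by blast
qed

end
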